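(* Let $a\geq 1$ and $b\geq 1$ be integers. For Lebesgue-almost every $x\in\Lambda^{a+b}$ we have $\lim_{k\to\infty}T_{a,b}^k(x)=(x_1^{\infty},\ldots,x_{a+b}^{\infty})$ with $x_1^{\infty}=x_2^{\infty}=\cdots=x_{a+1}^{\infty}=0$.
   Context: For $n\geq 1$ let $\Lambda^n=\{x\in\mathbb{R}^n : 0\leq x_1\leq\cdots\leq x_n\}$. For integers $a,b\geq 1$ the map $T_{a,b}:\Lambda^{a+b}\to\Lambda^{a+b}$ sends $x$ to the vector obtained by arranging $x_1,\ldots,x_a,\,x_{a+1}-x_a,\ldots,x_{a+b}-x_a$ in nondecreasing order. *)

theory Defs
  imports "HOL-Probability.Probability"
begin

text \<open>Vectors in R^n are functions nat => real with coordinates 0..n-1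
  (coordinate x_i of the paper is x (i-1)), extensional outside {..<n}.
  Lebesgue measure on R^n is the product measure PiM {..<n} (\<lambda>_. lborel).\<close>

definition Lambda :: "nat \<Rightarrow> (nat \<Rightarrow> real) set" where
  "Lambda n = {x \<in> extensional {..<n}. (n > 0 \<longrightarrow> 0 \<le> x 0) \<and> (\<forall>i. Suc i < n \<longrightarrow> x i \<le> x (Suc i))}"

definition T :: "nat \<Rightarrow> nat \<Rightarrow> (nat \<Rightarrow> real) \<Rightarrow> (nat \<Rightarrow> real)" where
  "T a b x = (let ys = sort (map (\<lambda>i. if i < a then x i else x i - x (a - 1)) [0..<a+b])
              in restrict (\<lambda>i. ys ! i) {..<a+b})"

end

theory Submission
  imports Defs "HOL-Combinatorics.Permutations"
begin

text \<open>Indices below are the paper's; x_a, the pivot subtracted by T, is coordinate a - 1 here.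
  Along an orbit every coordinate decreases (after sorting, the i-th entry is at most x_i)
  and stays nonnegative, so the orbit converges. Each step lowers the coordinate sum by
  b x_a, hence x_a tends to 0, and with it x_1, ..., x_{a-1}. If the limit of x_{a+1} were
  positive, eventually x_{a+1} \<ge> 2 x_a, the first a entries would no longer be touched, and
  x_a would be constant, hence 0 at some finite time. But every iterate is an integer
  linear image of x under an invertible matrix (each step permutes and subtracts a
  coordinate), so this forces x into one of countably many hyperplanes.\<close>

subsection \<open>Hyperplanes are null\<close>

lemma hyperplane_null_sets_PiM_lborel:
  fixes c :: "nat \<Rightarrow> real"
  assumes I: "finite I" and j: "j \<in> I" and cj: "c j \<noteq> 0"
  shows "{x \<in> space (PiM I (\<lambda>_. lborel)). (\<Sum>k\<in>I. c k * x k) = 0}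
           \<in> null_sets (PiM I (\<lambda>_. lborel))"
    (is "?H \<in> null_sets ?M")
proof -
  interpret product_sigma_finite "\<lambda>_. lborel :: real measure" by standard
  define J where "J = I - {j}"
  have IJ: "I = insert j J" "finite J" "j \<notin> J" using I j by (auto simp: J_def)
  have H_sets: "?H \<in> sets ?M" by measurable
  have slice_null: "(\<integral>\<^sup>+ y. indicator ?H (x(j := y)) \<partial>lborel) = 0" for x
  proof -
    define y0 where "y0 = - (\<Sum>k\<in>J. c k * x k) / c j"
    have "indicator ?H (x(j := y)) \<le> (indicator {y0} y :: ennreal)" for y
    proof (cases "x(j := y) \<in> ?H")
      case True
      have "(\<Sum>k\<in>I. c k * (x(j := y)) k) = c j * y + (\<Sum>k\<in>J. c k * x k)"
        unfolding IJ(1) using IJ(2,3) by (auto intro!: sum.cong)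
      with True have "y = y0" using cj by (simp add: y0_def field_simps)
      then show ?thesis by (simp add: indicator_def)
    qed simp
    then have "(\<integral>\<^sup>+ y. indicator ?H (x(j := y)) \<partial>lborel) \<le> (\<integral>\<^sup>+ y. indicator {y0} y \<partial>lborel)"
      by (intro nn_integral_mono) auto
    then show ?thesis by simp
  qed
  have "emeasure ?M ?H = (\<integral>\<^sup>+ x. indicator ?H x \<partial>?M)"
    using H_sets by simp
  also have "\<dots> = (\<integral>\<^sup>+ x. (\<integral>\<^sup>+ y. indicator ?H (x(j := y)) \<partial>lborel) \<partial>PiM J (\<lambda>_. lborel))"
    unfolding IJ(1) by (rule product_nn_integral_insert) (use IJ H_sets in auto)
  also have "\<dots> = 0" by (simp add: slice_null)
  finally show ?thesis using H_sets by (simp add: null_sets_def)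
qed

lemma nonzero_integer_hyperplanes_null_sets:
  fixes n :: nat
  defines "C \<equiv> {c \<in> {..<n} \<rightarrow>\<^sub>E (UNIV :: int set). \<exists>j<n. c j \<noteq> 0}"
  shows "(\<Union>c\<in>C. {x \<in> space (PiM {..<n} (\<lambda>_. lborel :: real measure)). (\<Sum>k<n. of_int (c k) * x k) = 0})
           \<in> null_sets (PiM {..<n} (\<lambda>_. lborel))"
proof (rule null_sets_UN')
  show "countable C"
    unfolding C_def by (intro countable_Collect countable_PiE) auto
next
  fix c assume "c \<in> C"
  then obtain j where "j < n" "c j \<noteq> 0" by (auto simp: C_def)
  then show "{x \<in> space (PiM {..<n} (\<lambda>_. lborel :: real measure)). (\<Sum>k<n. of_int (c k) * x k) = 0}
               \<in> null_sets (PiM {..<n} (\<lambda>_. lborel))"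
    using hyperplane_null_sets_PiM_lborel[of "{..<n}" j "\<lambda>k. of_int (c k)"] by simp
qed

subsection \<open>The dynamics of T on Lambda\<close>

definition T_entries :: "nat \<Rightarrow> nat \<Rightarrow> (nat \<Rightarrow> real) \<Rightarrow> real list" where
  "T_entries a b x = map (\<lambda>i. if i < a then x i else x i - x (a - 1)) [0..<a+b]"

lemma T_eq_sort_T_entries: "T a b x = restrict (\<lambda>i. sort (T_entries a b x) ! i) {..<a+b}"
  unfolding T_def T_entries_def Let_def by simp

lemma length_T_entries [simp]: "length (T_entries a b x) = a + b"
  by (simp add: T_entries_def)

lemma nth_T_entries:
  "i < a + b \<Longrightarrow> T_entries a b x ! i = (if i < a then x i else x i - x (a - 1))"
  by (simp add: T_entries_def)

lemma Lambda_mono: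
  assumes x: "x \<in> Lambda n" and "i \<le> j" "j < n"
  shows "x i \<le> x j"
  using assms(2,3)
proof (induction j)
  case (Suc j)
  show ?case
  proof (cases "i = Suc j")
    case False
    then have "x i \<le> x j" using Suc by simp
    also have "x j \<le> x (Suc j)" using x Suc.prems by (simp add: Lambda_def)
    finally show ?thesis .
  qed simp
qed simp

lemma Lambda_nonneg:
  assumes x: "x \<in> Lambda n" and i: "i < n"
  shows "0 \<le> x i"
  using x i Lambda_mono[OF x, of 0 i] by (simp add: Lambda_def)

lemma sort_nth_le_if_many_le:
  fixes xs :: "'a :: linorder list"
  assumes "i < length (filter (\<lambda>y. y \<le> t) xs)"
  shows "sort xs ! i \<le> t"
proof (rule ccontr)
  assume "\<not> sort xs ! i \<le> t"
  define s where "s = sort xs"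
  have "\<not> s ! k \<le> t" if "i \<le> k" "k < length s" for k
    using sorted_nth_mono[of s i k] that \<open>\<not> sort xs ! i \<le> t\<close> by (auto simp: s_def)
  then have "filter (\<lambda>y. y \<le> t) (drop i s) = []"
    by (auto simp: filter_empty_conv in_set_conv_nth)
  then have "length (filter (\<lambda>y. y \<le> t) s) \<le> i"
    by (metis append_Nil2 append_take_drop_id filter_append length_filter_le length_take
        min.bounded_iff order.refl)
  moreover have "length (filter (\<lambda>y. y \<le> t) s) = length (filter (\<lambda>y. y \<le> t) xs)"
    unfolding s_def by (metis mset_filter mset_sort size_mset)
  ultimately show False using assms by simp
qed

text \<open>Every entry x_k, x_k - x_a with k \<le> i is at most x_i, so the i-th smallest entry is too.\<close>
lemma T_le:
  assumes x: "x \<in> Lambda (a+b)" and a: "a \<ge> 1" and i: "i < a + b"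
  shows "T a b x i \<le> x i"
proof -
  have "{..i} \<subseteq> {k. k < length (T_entries a b x) \<and> T_entries a b x ! k \<le> x i}"
  proof safe
    fix k assume k: "k \<le> i"
    have "T_entries a b x ! k \<le> x k"
      using Lambda_nonneg[OF x, of "a - 1"] a k i by (simp add: nth_T_entries)
    also have "x k \<le> x i" using Lambda_mono[OF x k i] .
    finally show "T_entries a b x ! k \<le> x i" .
  qed (use i in simp)
  then have "card {..i} \<le> card {k. k < length (T_entries a b x) \<and> T_entries a b x ! k \<le> x i}"
    by (intro card_mono) auto
  then have "sort (T_entries a b x) ! i \<le> x i"
    by (intro sort_nth_le_if_many_le) (simp add: length_filter_conv_card)
  then show ?thesis using i by (simp add: T_eq_sort_T_entries)
qed

lemma T_Lambda:
  assumes x: "x \<in> Lambda (a+b)" and a: "a \<ge> 1"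
  shows "T a b x \<in> Lambda (a+b)"
proof -
  have entries_nonneg: "0 \<le> y" if "y \<in> set (T_entries a b x)" for y
    using that Lambda_nonneg[OF x] Lambda_mono[OF x, of "a - 1"] a
    by (auto simp: T_entries_def)
  have "0 \<le> T a b x 0" if "0 < a + b"
    using that entries_nonneg[of "sort (T_entries a b x) ! 0"] nth_mem[of 0 "sort (T_entries a b x)"]
    by (simp add: T_eq_sort_T_entries)
  moreover have "T a b x i \<le> T a b x (Suc i)" if "Suc i < a + b" for i
    using that sorted_nth_mono[of "sort (T_entries a b x)" i "Suc i"]
    by (simp add: T_eq_sort_T_entries)
  ultimately show ?thesis by (simp add: Lambda_def T_eq_sort_T_entries)
qed

lemma T_iter_Lambda:
  assumes "x \<in> Lambda (a+b)" and "a \<ge> 1"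
  shows "(T a b ^^ k) x \<in> Lambda (a+b)"
  by (induction k) (use assms T_Lambda in auto)

lemma sum_T:
  "(\<Sum>i<a+b. T a b x i) = (\<Sum>i<a+b. x i) - real b * x (a - 1)"
proof -
  have "(\<Sum>i<a+b. T a b x i) = sum_list (sort (T_entries a b x))"
    by (simp add: T_eq_sort_T_entries sum_list_sum_nth atLeast0LessThan)
  also have "\<dots> = sum_list (T_entries a b x)"
    by (metis mset_sort sum_mset_sum_list)
  also have "\<dots> = (\<Sum>i<a+b. x i - (if i < a then 0 else x (a - 1)))"
    by (auto simp: sum_list_sum_nth atLeast0LessThan nth_T_entries intro!: sum.cong)
  also have "\<dots> = (\<Sum>i<a+b. x i) - (\<Sum>i<a+b. if i < a then 0 else x (a - 1))"
    by (rule sum_subtractf)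
  also have "(\<Sum>i<a+b. if i < a then 0 else x (a - 1)) = (\<Sum>i\<in>{a..<a+b}. x (a - 1))"
    by (rule sum.mono_neutral_cong_right) auto
  finally show ?thesis by simp
qed

lemma T_eq_on_prefix:
  assumes x: "x \<in> Lambda (a+b)" and gap: "2 * x (a - 1) \<le> x a" and i: "i < a"
  shows "T a b x i = x i"
proof -
  have "sorted (T_entries a b x)"
    unfolding sorted_iff_nth_mono
  proof (intro allI impI)
    fix i j assume ij: "i \<le> j" "j < length (T_entries a b x)"
    then have j: "j < a + b" by simp
    have "x i \<le> x j" using Lambda_mono[OF x ij(1) j] .
    moreover have "x i \<le> x (a - 1)" "x a \<le> x j" if "i < a" "\<not> j < a"
      using that j Lambda_mono[OF x, of i "a - 1"] Lambda_mono[OF x, of a j] by auto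
    ultimately show "T_entries a b x ! i \<le> T_entries a b x ! j"
      using ij j gap by (auto simp: nth_T_entries)
  qed
  then show ?thesis using i by (simp add: T_eq_sort_T_entries sorted_sort_id nth_T_entries)
qed

context
  fixes a b :: nat and x :: "nat \<Rightarrow> real"
  assumes a: "a \<ge> 1" and b: "b \<ge> 1" and x: "x \<in> Lambda (a+b)"
begin

lemma T_iter_nonneg: "i < a + b \<Longrightarrow> 0 \<le> (T a b ^^ k) x i"
  using Lambda_nonneg[OF T_iter_Lambda[OF x a]] .

lemma T_iter_decseq: "i < a + b \<Longrightarrow> decseq (\<lambda>k. (T a b ^^ k) x i)"
  by (rule decseq_SucI) (simp add: T_le[OF T_iter_Lambda[OF x a] a])

lemma T_iter_convergent:
  assumes "i < a + b"
  shows "convergent (\<lambda>k. (T a b ^^ k) x i)"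
proof -
  obtain L where "(\<lambda>k. (T a b ^^ k) x i) \<longlonglongrightarrow> L"
    using decseq_convergent[OF T_iter_decseq[OF assms], of 0] T_iter_nonneg[OF assms] by blast
  then show ?thesis by (auto simp: convergent_def)
qed

text \<open>Each step removes b x_a from the coordinate sum, which stays nonnegative, so the values
  of x_a along the orbit form a convergent series.\<close>
lemma T_iter_pivot_tendsto_zero: "(\<lambda>k. (T a b ^^ k) x (a - 1)) \<longlonglongrightarrow> 0"
proof -
  define X where "X k = (T a b ^^ k) x" for k
  define S where "S k = (\<Sum>i<a+b. X k i)" for k
  have S: "S k = S 0 - real b * (\<Sum>m<k. X m (a - 1))" for k
    by (induction k) (simp_all add: S_def X_def sum_T algebra_simps)
  have S_nonneg: "0 \<le> S k" for k
    unfolding S_def X_def by (intro sum_nonneg T_iter_nonneg) simp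
  have "(\<Sum>m<k. X m (a - 1)) \<le> S 0 / real b" for k
    using S[of k] S_nonneg[of k] b by (simp add: field_simps)
  then have "summable (\<lambda>m. X m (a - 1))"
    using a by (intro summableI_nonneg_bounded) (auto simp: X_def intro: T_iter_nonneg)
  then show ?thesis
    unfolding X_def by (rule summable_LIMSEQ_zero)
qed

lemma T_iter_tendsto_zero_below_pivot:
  assumes "i < a"
  shows "(\<lambda>k. (T a b ^^ k) x i) \<longlonglongrightarrow> 0"
proof (rule tendsto_sandwich[OF _ _ tendsto_const T_iter_pivot_tendsto_zero])
  show "\<forall>\<^sub>F k in sequentially. 0 \<le> (T a b ^^ k) x i"
    using assms by (intro always_eventually allI T_iter_nonneg) simp
  show "\<forall>\<^sub>F k in sequentially. (T a b ^^ k) x i \<le> (T a b ^^ k) x (a - 1)"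
    using assms by (intro always_eventually allI Lambda_mono[OF T_iter_Lambda[OF x a]]) auto
qed

text \<open>Once x_a < x_{a+1}/2, the first a coordinates are frozen; x_a, tending to 0, must then
  already be 0.\<close>
lemma T_iter_pivot_hits_zero:
  assumes lim: "(\<lambda>k. (T a b ^^ k) x a) \<longlonglongrightarrow> l" and "l \<noteq> 0"
  shows "\<exists>K. (T a b ^^ K) x (a - 1) = 0"
proof -
  define X where "X k = (T a b ^^ k) x" for k
  have aa: "a < a + b" using b by simp
  have l_le: "l \<le> X k a" for k
    unfolding X_def by (rule decseq_ge[OF T_iter_decseq[OF aa] lim])
  have "0 \<le> l"
    by (rule LIMSEQ_le_const[OF lim]) (use T_iter_nonneg[OF aa] in auto)
  then have "l > 0" using \<open>l \<noteq> 0\<close> by simp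
  then have "\<forall>\<^sub>F k in sequentially. X k (a - 1) < l / 2"
    using T_iter_pivot_tendsto_zero by (intro order_tendstoD(2)) (auto simp: X_def)
  then obtain K where K: "\<And>k. k \<ge> K \<Longrightarrow> X k (a - 1) < l / 2"
    by (auto simp: eventually_sequentially)
  have "X (Suc k) (a - 1) = X k (a - 1)" if "k \<ge> K" for k
  proof -
    have "2 * X k (a - 1) \<le> X k a" using K[OF that] l_le[of k] by simp
    then show ?thesis
      using T_eq_on_prefix[OF T_iter_Lambda[OF x a]] a by (simp add: X_def)
  qed
  then have "X (d + K) (a - 1) = X K (a - 1)" for d
    by (induction d) auto
  moreover have "(\<lambda>d. X (d + K) (a - 1)) \<longlonglongrightarrow> 0"
    using LIMSEQ_ignore_initial_segment[OF T_iter_pivot_tendsto_zero] by (simp add: X_def)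
  ultimately have "X K (a - 1) = 0"
    using LIMSEQ_const_iff by fastforce
  then show ?thesis by (auto simp: X_def)
qed

lemma T_iter_limit_or_pivot_hits_zero:
  "(\<exists>L. (\<forall>i < a+b. (\<lambda>k. (T a b ^^ k) x i) \<longlonglongrightarrow> L i) \<and> (\<forall>i \<le> a. L i = 0))
     \<or> (\<exists>K. (T a b ^^ K) x (a - 1) = 0)"
proof -
  define L where "L i = lim (\<lambda>k. (T a b ^^ k) x i)" for i
  have lim: "(\<lambda>k. (T a b ^^ k) x i) \<longlonglongrightarrow> L i" if "i < a + b" for i
    using T_iter_convergent[OF that] by (simp add: L_def convergent_LIMSEQ_iff)
  have below: "L i = 0" if "i < a" for i
    using LIMSEQ_unique[OF lim T_iter_tendsto_zero_below_pivot] that by simp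
  show ?thesis
  proof (cases "L a = 0")
    case True
    then have "\<forall>i \<le> a. L i = 0" using below by (auto simp: le_less)
    then show ?thesis using lim by blast
  next
    case False
    then show ?thesis using T_iter_pivot_hits_zero[OF lim False] b by simp
  qed
qed

end

subsection \<open>Iterates as integer linear images\<close>

definition int_mat_vec :: "nat \<Rightarrow> (nat \<Rightarrow> nat \<Rightarrow> int) \<Rightarrow> (nat \<Rightarrow> real) \<Rightarrow> nat \<Rightarrow> real" where
  "int_mat_vec n R w i = (\<Sum>j<n. of_int (R i j) * w j)"

definition int_mat_onto :: "nat \<Rightarrow> (nat \<Rightarrow> nat \<Rightarrow> int) \<Rightarrow> bool" where
  "int_mat_onto n R \<longleftrightarrow> (\<forall>z. \<exists>w. \<forall>i<n. z i = int_mat_vec n R w i)"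

lemma int_mat_onto_row_nonzero:
  assumes "int_mat_onto n R" and "r < n"
  shows "\<exists>j<n. R r j \<noteq> 0"
proof (rule ccontr)
  assume "\<not> (\<exists>j<n. R r j \<noteq> 0)"
  then have zero: "int_mat_vec n R w r = 0" for w
    by (simp add: int_mat_vec_def)
  obtain w where "\<forall>i<n. (\<lambda>_. 1::real) i = int_mat_vec n R w i"
    using assms(1)[unfolded int_mat_onto_def, rule_format, of "\<lambda>_. 1"] by blast
  then have "int_mat_vec n R w r = 1" using assms(2) by simp
  then show False using zero[of w] by simp
qed

lemma T_permutation_form:
  "\<exists>p. p permutes {..<a+b} \<and>
     (\<forall>i<a+b. T a b y i = (if p i < a then y (p i) else y (p i) - y (a - 1)))"
proof -
  obtain p where p: "p permutes {..<length (T_entries a b y)}"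
    and sorted: "permute_list p (T_entries a b y) = sort (T_entries a b y)"
    by (rule mset_eq_permutation[of "sort (T_entries a b y)"]) simp
  have p_lt: "p i < a + b" if "i < a + b" for i
    using permutes_in_image[OF p] that by simp
  have "T a b y i = T_entries a b y ! p i" if "i < a + b" for i
  proof -
    have "T a b y i = sort (T_entries a b y) ! i" using that by (simp add: T_eq_sort_T_entries)
    also have "\<dots> = permute_list p (T_entries a b y) ! i" by (simp only: sorted)
    also have "\<dots> = T_entries a b y ! p i" using that by (intro permute_list_nth[OF p]) simp
    finally show ?thesis .
  qed
  then show ?thesis
    using p p_lt by (intro exI[of _ p]) (simp add: nth_T_entries)
qed

text \<open>T acts on an integer linear image of x by a permutation followed by subtracting one
  coordinate; both steps are invertible, so surjectivity of the matrix is preserved.\<close>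
lemma T_int_mat_step:
  assumes a: "a \<ge> 1" and R: "int_mat_onto (a+b) R"
    and y: "\<forall>i<a+b. y i = int_mat_vec (a+b) R x i"
  shows "\<exists>R'. int_mat_onto (a+b) R' \<and> (\<forall>i<a+b. T a b y i = int_mat_vec (a+b) R' x i)"
proof -
  define n where "n = a + b"
  obtain p where p: "p permutes {..<n}"
    and Ty: "\<And>i. i < n \<Longrightarrow> T a b y i = (if p i < a then y (p i) else y (p i) - y (a - 1))"
    using T_permutation_form[of a b y] by (auto simp: n_def)
  have p_lt: "p i < n" if "i < n" for i
    using permutes_in_image[OF p] that by simp
  have a1: "a - 1 < n" using a by (simp add: n_def)
  define R' where "R' i j = R (p i) j - (if p i < a then 0 else R (a - 1) j)" for i j
  have R'_vec: "int_mat_vec n R' w i =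
      (if p i < a then int_mat_vec n R w (p i) else int_mat_vec n R w (p i) - int_mat_vec n R w (a - 1))"
    for w i
    by (simp add: int_mat_vec_def R'_def left_diff_distrib sum_subtractf)
  have "int_mat_onto n R'"
    unfolding int_mat_onto_def
  proof
    fix z :: "nat \<Rightarrow> real"
    define w where "w l = z (inv p l) + (if l < a then 0 else z (inv p (a - 1)))" for l
    obtain v where v: "\<forall>i<n. w i = int_mat_vec n R v i"
      using R[unfolded int_mat_onto_def, rule_format, of w] by (auto simp: n_def)
    have "z i = int_mat_vec n R' v i" if "i < n" for i
    proof -
      have "w (p i) = int_mat_vec n R v (p i)" "w (a - 1) = int_mat_vec n R v (a - 1)"
        using v p_lt[OF that] a1 by auto
      then show ?thesis
        using a by (auto simp: R'_vec w_def permutes_inverses(2)[OF p] split: if_splits)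
    qed
    then show "\<exists>v. \<forall>i<n. z i = int_mat_vec n R' v i" by blast
  qed
  moreover have "T a b y i = int_mat_vec n R' x i" if "i < n" for i
    unfolding R'_vec using Ty[OF that] y p_lt[OF that] a1 by (simp add: n_def)
  ultimately show ?thesis by (auto simp: n_def)
qed

lemma T_iter_int_mat:
  assumes "a \<ge> 1"
  shows "\<exists>R. int_mat_onto (a+b) R \<and> (\<forall>i<a+b. (T a b ^^ k) x i = int_mat_vec (a+b) R x i)"
proof (induction k)
  case 0
  define I :: "nat \<Rightarrow> nat \<Rightarrow> int" where "I i j = (if i = j then 1 else 0)" for i j
  have "int_mat_vec (a+b) I w i = (\<Sum>j<a+b. if j = i then w i else 0)" for w i
    unfolding int_mat_vec_def by (intro sum.cong) (auto simp: I_def)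
  then have I: "int_mat_vec (a+b) I w i = w i" if "i < a + b" for w i
    using that by simp
  have "int_mat_onto (a+b) I"
    unfolding int_mat_onto_def
  proof
    fix z :: "nat \<Rightarrow> real"
    show "\<exists>w. \<forall>i<a+b. z i = int_mat_vec (a+b) I w i" using I by (intro exI[of _ z]) simp
  qed
  then show ?case using I by auto
next
  case (Suc k)
  then show ?case using T_int_mat_step[OF assms] by auto
qed

lemma T_iter_nonzero_integer_form:
  assumes "a \<ge> 1" and "i < a + b"
  shows "\<exists>c \<in> {..<a+b} \<rightarrow>\<^sub>E (UNIV :: int set). (\<exists>j<a+b. c j \<noteq> 0) \<and>
           (T a b ^^ k) x i = (\<Sum>j<a+b. of_int (c j) * x j)"
proof -
  obtain R where R: "int_mat_onto (a+b) R"
    and iter: "\<forall>i<a+b. (T a b ^^ k) x i = int_mat_vec (a+b) R x i"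
    using T_iter_int_mat[OF assms(1)] by blast
  define c where "c = restrict (R i) {..<a+b}"
  obtain j where j: "j < a + b" "R i j \<noteq> 0"
    using int_mat_onto_row_nonzero[OF R assms(2)] by blast
  have "c \<in> {..<a+b} \<rightarrow>\<^sub>E UNIV" "c j \<noteq> 0"
    using j by (simp_all add: c_def)
  moreover have "(T a b ^^ k) x i = (\<Sum>j<a+b. of_int (c j) * x j)"
    unfolding iter[rule_format, OF assms(2)] int_mat_vec_def c_def by (intro sum.cong) auto
  ultimately show ?thesis using j(1) by blast
qed

theorem lemma4p2:
  fixes a b :: nat
  assumes "a \<ge> 1" and "b \<ge> 1"
  shows "AE x in PiM {..<a+b} (\<lambda>_. lborel).
           x \<in> Lambda (a+b) \<longrightarrow>
           (\<exists>L :: nat \<Rightarrow> real.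
              (\<forall>i < a+b. (\<lambda>k. ((T a b ^^ k) x) i) \<longlonglongrightarrow> L i) \<and>
              (\<forall>i \<le> a. L i = 0))"
proof -
  let ?M = "PiM {..<a+b} (\<lambda>_. lborel :: real measure)"
  have "x \<in> (\<Union>c\<in>{c \<in> {..<a+b} \<rightarrow>\<^sub>E UNIV. \<exists>j<a+b. c j \<noteq> 0}.
              {x \<in> space ?M. (\<Sum>k<a+b. of_int (c k) * x k) = 0})"
    if x: "x \<in> space ?M" "x \<in> Lambda (a+b)"
      and no_limit: "\<nexists>L. (\<forall>i < a+b. (\<lambda>k. ((T a b ^^ k) x) i) \<longlonglongrightarrow> L i) \<and> (\<forall>i \<le> a. L i = 0)"
    for x
  proof -
    obtain K where K: "(T a b ^^ K) x (a - 1) = 0"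
      using T_iter_limit_or_pivot_hits_zero[OF assms x(2)] no_limit by blast
    have pivot: "a - 1 < a + b" using assms by simp
    obtain c where "c \<in> {..<a+b} \<rightarrow>\<^sub>E UNIV" "\<exists>j<a+b. c j \<noteq> 0"
      and "(\<Sum>j<a+b. of_int (c j) * x j) = 0"
      using T_iter_nonzero_integer_form[OF assms(1) pivot, where k = K and x = x] unfolding K by auto
    then show ?thesis using x(1) by blast
  qed
  then show ?thesis
    by (intro AE_I'[OF nonzero_integer_hyperplanes_null_sets]) blast
qed

end
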